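(* Let $\eta^{(\varepsilon)}(t)$, $\varepsilon\in(0,1]$, be semi-Markov processes on $\mathbb{X}=\{1,\dots,N\}$ built from Markov renewal processes as in the context, satisfying condition A of the context and conditions B and C of the context for some $\varepsilon_0\in(0,1]$. Fix $r\in\mathbb{X}$, assume $\mathsf P\{\eta^{(\varepsilon)}_0=r\}=0$, and let $_r\eta^{(\varepsilon)}(t)$ be the reduced semi-Markov process on $_r\mathbb{X}=\mathbb{X}\setminus\{r\}$ with transition probabilities $_rQ^{(\varepsilon)}_{ij}(t)$ and expectations $_re_{ij}(\varepsilon)=\int_0^\infty t\,{}_rQ^{(\varepsilon)}_{ij}(dt)$. Then conditions B and C hold for $_r\eta^{(\varepsilon)}(t)$: $_rQ^{(\varepsilon)}_{ij}(0)=0$ and $_re_{ij}(\varepsilon)<\infty$ for all $i,j\in{}_r\mathbb{X}$, $\varepsilon\in(0,\varepsilon_0]$.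
   Context: For $\varepsilon\in(0,1]$, $(\eta^{(\varepsilon)}_n,\kappa^{(\varepsilon)}_n)$, $n\ge0$, is a homogeneous Markov chain on $\mathbb{X}\times[0,\infty)$, $\kappa^{(\varepsilon)}_0=0$, with transition probabilities $Q^{(\varepsilon)}_{ij}(t)=\mathsf P\{\eta^{(\varepsilon)}_1=j,\kappa^{(\varepsilon)}_1\le t\mid\eta^{(\varepsilon)}_0=i,\kappa^{(\varepsilon)}_0=s\}$ not depending on $s$; $p_{ij}(\varepsilon)=Q^{(\varepsilon)}_{ij}(\infty)$; $e_{ij}(\varepsilon)=\int_0^\infty t\,Q^{(\varepsilon)}_{ij}(dt)$; the semi-Markov process is $\eta^{(\varepsilon)}(t)=\eta^{(\varepsilon)}_{\nu^{(\varepsilon)}(t)}$, $\nu^{(\varepsilon)}(t)=\max\{n\ge0:\kappa^{(\varepsilon)}_1+\dots+\kappa^{(\varepsilon)}_n\le t\}$. Condition A: there exist $\mathbb{Y}_i\subseteq\mathbb{X}$ and $\varepsilon_0\in(0,1]$ such that for $\varepsilon\in(0,\varepsilon_0]$: $p_{ij}(\varepsilon)>0$ for $j\in\mathbb{Y}_i$, $p_{ij}(\varepsilon)=0$ for $j\notin\mathbb{Y}_i$, and for every $i,j$ there exist $n\ge1$, $i=l_0,\dots,l_n=j$ with $l_{k+1}\in\mathbb{Y}_{l_k}$. Condition B: $Q^{(\varepsilon)}_{ij}(0)=0$ for all $i,j$, $\varepsilon\in(0,\varepsilon_0]$. Condition C: $e_{ij}(\varepsilon)<\infty$ for all $i,j$,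 $\varepsilon\in(0,\varepsilon_0]$. Reduced process: $_r\xi_0=0$, $_r\xi_n=\min\{k>{}_r\xi_{n-1}:\eta^{(\varepsilon)}_k\in{}_r\mathbb{X}\}$, $_r\eta^{(\varepsilon)}_n=\eta^{(\varepsilon)}_{_r\xi_n}$, $_r\kappa^{(\varepsilon)}_0=0$, $_r\kappa^{(\varepsilon)}_n=\sum_{k={}_r\xi_{n-1}+1}^{_r\xi_n}\kappa^{(\varepsilon)}_k$; this is a Markov renewal process on $_r\mathbb{X}\times[0,\infty)$ with transition probabilities $_rQ^{(\varepsilon)}_{ij}(t)=\mathsf P\{{}_r\eta^{(\varepsilon)}_1=j,{}_r\kappa^{(\varepsilon)}_1\le t\mid{}_r\eta^{(\varepsilon)}_0=i\}$, and $_r\eta^{(\varepsilon)}(t)$ is its semi-Markov process. *)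

theory Defs
  imports "HOL-Probability.Probability"
begin

text \<open>K eps i j is the (sub-probability) measure on the real line with
  distribution function Q_ij(t) = measure (K eps i j) {..t};
  p_ij(eps) = Q_ij(infinity) = measure (K eps i j) UNIV.\<close>

definition semi_markov_kernel ::
  "nat \<Rightarrow> (real \<Rightarrow> nat \<Rightarrow> nat \<Rightarrow> real measure) \<Rightarrow> bool" where
  "semi_markov_kernel N K \<longleftrightarrow>
     (\<forall>\<epsilon>\<in>{0<..1}. \<forall>i\<in>{1..N}. \<forall>j\<in>{1..N}.
        sets (K \<epsilon> i j) = sets borel \<and> finite_measure (K \<epsilon> i j) \<and>
        emeasure (K \<epsilon> i j) {..<0} = 0) \<and>
     (\<forall>\<epsilon>\<in>{0<..1}. \<forall>i\<in>{1..N}. (\<Sum>j\<in>{1..N}. measure (K \<epsilon> i j) UNIV) = 1)"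

definition trans_prob :: "(real \<Rightarrow> nat \<Rightarrow> nat \<Rightarrow> real measure) \<Rightarrow> real \<Rightarrow> nat \<Rightarrow> nat \<Rightarrow> real" where
  "trans_prob K \<epsilon> i j = measure (K \<epsilon> i j) UNIV"

definition Qdf :: "(real \<Rightarrow> nat \<Rightarrow> nat \<Rightarrow> real measure) \<Rightarrow> real \<Rightarrow> nat \<Rightarrow> nat \<Rightarrow> real \<Rightarrow> real" where
  "Qdf K \<epsilon> i j t = measure (K \<epsilon> i j) {..t}"

definition expect :: "(real \<Rightarrow> nat \<Rightarrow> nat \<Rightarrow> real measure) \<Rightarrow> real \<Rightarrow> nat \<Rightarrow> nat \<Rightarrow> ennreal" where
  "expect K \<epsilon> i j = (\<integral>\<^sup>+ t. ennreal t \<partial>K \<epsilon> i j)"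

definition condA :: "nat \<Rightarrow> (real \<Rightarrow> nat \<Rightarrow> nat \<Rightarrow> real measure) \<Rightarrow> real \<Rightarrow> bool" where
  "condA N K \<epsilon>0 \<longleftrightarrow> (\<exists>Y :: nat \<Rightarrow> nat set.
     (\<forall>i\<in>{1..N}. Y i \<subseteq> {1..N}) \<and>
     (\<forall>\<epsilon>\<in>{0<..\<epsilon>0}. \<forall>i\<in>{1..N}. \<forall>j\<in>{1..N}.
        (j \<in> Y i \<longrightarrow> trans_prob K \<epsilon> i j > 0) \<and> (j \<notin> Y i \<longrightarrow> trans_prob K \<epsilon> i j = 0)) \<and>
     (\<forall>i\<in>{1..N}. \<forall>j\<in>{1..N}. \<exists>n\<ge>1. \<exists>l :: nat \<Rightarrow> nat.
        l 0 = i \<and> l n = j \<and> (\<forall>k<n. l (Suc k) \<in> Y (l k))))"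

definition condB :: "nat \<Rightarrow> (real \<Rightarrow> nat \<Rightarrow> nat \<Rightarrow> real measure) \<Rightarrow> real \<Rightarrow> bool" where
  "condB N K \<epsilon>0 \<longleftrightarrow> (\<forall>\<epsilon>\<in>{0<..\<epsilon>0}. \<forall>i\<in>{1..N}. \<forall>j\<in>{1..N}. Qdf K \<epsilon> i j 0 = 0)"

definition condC :: "nat \<Rightarrow> (real \<Rightarrow> nat \<Rightarrow> nat \<Rightarrow> real measure) \<Rightarrow> real \<Rightarrow> bool" where
  "condC N K \<epsilon>0 \<longleftrightarrow> (\<forall>\<epsilon>\<in>{0<..\<epsilon>0}. \<forall>i\<in>{1..N}. \<forall>j\<in>{1..N}. expect K \<epsilon> i j < \<infinity>)"

text \<open>The event {r_eta_1 = j, r_kappa_1 in A} given eta_0 = i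
  (i, j distinct from r) is the disjoint union over n >= 1 of the events
  {eta_1 = ... = eta_(n-1) = r, eta_n = j, kappa_1+...+kappa_n in A}.
  By the finite-dimensional distributions of the Markov renewal process,
  P{eta_1 = s_1, kappa_1 in A_1, ..., eta_n = s_n, kappa_n in A_n | eta_0 = s_0}
    = prod_k Q_(s_(k-1) s_k)(A_k),
  i.e. the joint law of (kappa_1..kappa_n) on the event that the states are s
  is the product measure of the kernels K (s_(k-1)) (s_k).\<close>

definition taboo_path :: "nat \<Rightarrow> nat \<Rightarrow> nat \<Rightarrow> nat \<Rightarrow> nat \<Rightarrow> nat" where
  "taboo_path i r j n k = (if k = 0 then i else if k < n then r else j)"

definition taboo_law ::
  "(real \<Rightarrow> nat \<Rightarrow> nat \<Rightarrow> real measure) \<Rightarrow> real \<Rightarrow> nat \<Rightarrow> nat \<Rightarrow> nat \<Rightarrow> nat \<Rightarrow> (nat \<Rightarrow> real) measure" where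
  "taboo_law K \<epsilon> r i j n =
     PiM {1..n} (\<lambda>k. K \<epsilon> (taboo_path i r j n (k - 1)) (taboo_path i r j n k))"

text \<open>rQ_ij(t) = P{r_eta_1 = j, r_kappa_1 <= t | r_eta_0 = i}.\<close>
definition red_Q ::
  "(real \<Rightarrow> nat \<Rightarrow> nat \<Rightarrow> real measure) \<Rightarrow> nat \<Rightarrow> real \<Rightarrow> nat \<Rightarrow> nat \<Rightarrow> real \<Rightarrow> ennreal" where
  "red_Q K r \<epsilon> i j t =
     (\<Sum>m. emeasure (taboo_law K \<epsilon> r i j (Suc m))
            {x \<in> space (taboo_law K \<epsilon> r i j (Suc m)). (\<Sum>k\<in>{1..Suc m}. x k) \<le> t})"

text \<open>re_ij = int_0^infinity t rQ_ij(dt) = E[r_kappa_1 ; r_eta_1 = j | r_eta_0 = i].\<close>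
definition red_e ::
  "(real \<Rightarrow> nat \<Rightarrow> nat \<Rightarrow> real measure) \<Rightarrow> nat \<Rightarrow> real \<Rightarrow> nat \<Rightarrow> nat \<Rightarrow> ennreal" where
  "red_e K r \<epsilon> i j =
     (\<Sum>m. \<integral>\<^sup>+ x. ennreal (\<Sum>k\<in>{1..Suc m}. x k) \<partial>taboo_law K \<epsilon> r i j (Suc m))"

end

theory Submission
  imports Defs
begin

text \<open>A transition i to j of the reduced chain is a path i, r, ..., r, j of some length n, and
  its holding times have the product law of the kernels along the path.  This product charges
  the set where t_1 + ... + t_n <= 0 only if some factor charges (-\<infinity>, 0], which condition B
  excludes.  The expected total holding time of the paths of length n is at most n E q^(n-3),
  where E bounds the expectations e_ab and q = p_rr; condition A forces q < 1 because r can be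
  left, so the series over n converges.\<close>

lemma ennreal_add_le: "ennreal (a + b) \<le> ennreal a + ennreal b"
  unfolding ennreal_plus_if by (intro ennreal_leI) auto

lemma ennreal_sum_le: "ennreal (\<Sum>k\<in>I. f k) \<le> (\<Sum>k\<in>I. ennreal (f k))"
proof (induction I rule: infinite_finite_induct)
  case (insert a I)
  then show ?case
    using ennreal_add_le[of "f a" "sum f I"] by (auto intro: order_trans add_left_mono)
qed simp_all

lemma emeasure_PiM_sum_nonpos_eq_0:
  fixes M :: "'i \<Rightarrow> real measure"
  assumes "product_sigma_finite M" and "finite I" and "I \<noteq> {}"
    and sets: "\<And>k. k \<in> I \<Longrightarrow> sets (M k) = sets borel"
    and null: "\<And>k. k \<in> I \<Longrightarrow> emeasure (M k) {..0} = 0"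
  shows "emeasure (PiM I M) {x \<in> space (PiM I M). (\<Sum>k\<in>I. x k) \<le> 0} = 0"
proof -
  interpret product_sigma_finite M by fact
  define A where "A k = PiE I (\<lambda>l. if l = k then {..0::real} else UNIV)" for k
  have A_sets: "A k \<in> sets (PiM I M)" for k
    unfolding A_def using sets by (intro sets_PiM_I_finite \<open>finite I\<close>) auto
  have A_null: "A k \<in> null_sets (PiM I M)" if "k \<in> I" for k
  proof -
    have "emeasure (PiM I M) (A k) = (\<Prod>l\<in>I. emeasure (M l) (if l = k then {..0} else UNIV))"
      unfolding A_def using sets by (intro emeasure_PiM \<open>finite I\<close>) auto
    also have "\<dots> = 0"
      using that null \<open>finite I\<close> by (intro prod_zero) auto
    finally show ?thesis using A_sets by blast
  qed
  have "{x \<in> space (PiM I M). (\<Sum>k\<in>I. x k) \<le> 0} \<subseteq> (\<Union>k\<in>I. A k)"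
  proof safe
    fix x assume x: "x \<in> space (PiM I M)" and "(\<Sum>k\<in>I. x k) \<le> 0"
    then obtain k where "k \<in> I" "x k \<le> 0"
      using sum_pos[OF \<open>finite I\<close> \<open>I \<noteq> {}\<close>, of x] by force
    moreover have "x \<in> extensional I"
      using x by (simp add: space_PiM PiE_def)
    ultimately show "x \<in> (\<Union>k\<in>I. A k)"
      unfolding A_def by (auto simp: PiE_iff)
  qed
  then have "emeasure (PiM I M) {x \<in> space (PiM I M). (\<Sum>k\<in>I. x k) \<le> 0} \<le>
      emeasure (PiM I M) (\<Union>k\<in>I. A k)"
    using \<open>finite I\<close> A_sets by (intro emeasure_mono) auto
  also have "\<dots> = 0"
    using \<open>finite I\<close> A_null by (intro null_setsD1 null_sets.finite_UN) auto
  finally show ?thesis by simp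
qed

lemma nn_integral_PiM_component:
  fixes M :: "'i \<Rightarrow> real measure"
  assumes "product_sigma_finite M" and "finite I" and "k \<in> I"
    and sets: "\<And>k. k \<in> I \<Longrightarrow> sets (M k) = sets borel"
  shows "(\<integral>\<^sup>+ x. ennreal (x k) \<partial>PiM I M) =
    (\<integral>\<^sup>+ t. ennreal t \<partial>M k) * (\<Prod>l\<in>I - {k}. emeasure (M l) UNIV)"
proof -
  interpret product_sigma_finite M by fact
  define f where "f l = (\<lambda>t. if l = k then ennreal t else 1)" for l
  have "(\<Prod>l\<in>I. f l (x l)) = ennreal (x k)" for x
    unfolding f_def using \<open>finite I\<close> \<open>k \<in> I\<close> by (simp add: prod.delta)
  then have "(\<integral>\<^sup>+ x. ennreal (x k) \<partial>PiM I M) = (\<integral>\<^sup>+ x. (\<Prod>l\<in>I. f l (x l)) \<partial>PiM I M)"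
    by simp
  also have "\<dots> = (\<Prod>l\<in>I. integral\<^sup>N (M l) (f l))"
    using sets by (intro product_nn_integral_prod \<open>finite I\<close>)
      (auto simp: f_def measurable_cong_sets[OF sets refl])
  also have "\<dots> = integral\<^sup>N (M k) (f k) * (\<Prod>l\<in>I - {k}. integral\<^sup>N (M l) (f l))"
    using \<open>finite I\<close> \<open>k \<in> I\<close> by (simp add: prod.remove)
  also have "(\<Prod>l\<in>I - {k}. integral\<^sup>N (M l) (f l)) = (\<Prod>l\<in>I - {k}. emeasure (M l) UNIV)"
  proof (intro prod.cong refl)
    fix l assume "l \<in> I - {k}"
    then have "space (M l) = UNIV"
      using sets_eq_imp_space_eq[OF sets[of l]] by simp
    with \<open>l \<in> I - {k}\<close> show "integral\<^sup>N (M l) (f l) = emeasure (M l) UNIV"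
      by (simp add: f_def)
  qed
  finally show ?thesis by (simp add: f_def)
qed

lemma nn_integral_PiM_sum_le:
  fixes M :: "'i \<Rightarrow> real measure"
  assumes "product_sigma_finite M" and "finite I"
    and sets: "\<And>k. k \<in> I \<Longrightarrow> sets (M k) = sets borel"
  shows "(\<integral>\<^sup>+ x. ennreal (\<Sum>k\<in>I. x k) \<partial>PiM I M) \<le>
    (\<Sum>k\<in>I. (\<integral>\<^sup>+ t. ennreal t \<partial>M k) * (\<Prod>l\<in>I - {k}. emeasure (M l) UNIV))"
proof -
  have "(\<integral>\<^sup>+ x. ennreal (\<Sum>k\<in>I. x k) \<partial>PiM I M) \<le> (\<integral>\<^sup>+ x. (\<Sum>k\<in>I. ennreal (x k)) \<partial>PiM I M)"
    by (intro nn_integral_mono ennreal_sum_le)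
  also have "\<dots> = (\<Sum>k\<in>I. \<integral>\<^sup>+ x. ennreal (x k) \<partial>PiM I M)"
  proof (intro nn_integral_sum)
    fix k assume "k \<in> I"
    then have "(\<lambda>x. x k) \<in> PiM I M \<rightarrow>\<^sub>M M k"
      by (rule measurable_component_singleton)
    moreover have "PiM I M \<rightarrow>\<^sub>M M k = borel_measurable (PiM I M)"
      using \<open>k \<in> I\<close> by (intro measurable_cong_sets) (simp_all add: sets)
    ultimately have "(\<lambda>x. x k) \<in> borel_measurable (PiM I M)"
      by simp
    then show "(\<lambda>x. ennreal (x k)) \<in> borel_measurable (PiM I M)"
      by (rule measurable_compose[OF _ measurable_ennreal])
  qed
  also have "\<dots> = (\<Sum>k\<in>I. (\<integral>\<^sup>+ t. ennreal t \<partial>M k) * (\<Prod>l\<in>I - {k}. emeasure (M l) UNIV))"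
    using assms by (intro sum.cong nn_integral_PiM_component) auto
  finally show ?thesis .
qed

lemma prod_le_power_card:
  fixes f :: "'a \<Rightarrow> ennreal"
  assumes "finite I" and "A \<subseteq> I"
    and "\<And>l. l \<in> I \<Longrightarrow> f l \<le> 1" and "\<And>l. l \<in> A \<Longrightarrow> f l = c"
  shows "prod f I \<le> c ^ card A"
proof -
  have "prod f I = prod f (I - A) * prod f A"
    using assms(2,1) by (rule prod.subset_diff)
  also have "\<dots> \<le> 1 * prod f A"
    using assms(3) by (intro mult_right_mono prod_le_1) auto
  also have "prod f A = c ^ card A"
    using assms(4) by simp
  finally show ?thesis by simp
qed

lemma summable_Suc_mult_power_minus_2:
  fixes q :: real
  assumes "norm q < 1"
  shows "summable (\<lambda>m. real (Suc m) * q ^ (m - 2))"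
proof -
  have "summable (\<lambda>m. real (Suc m) * q ^ m)"
    using termdiff_converges[of q 1 "\<lambda>_. 1"] assms by (simp add: diffs_def)
  then have "summable (\<lambda>m. real (Suc m) * q ^ m + 2 * q ^ m)"
    using assms by (intro summable_add summable_mult summable_geometric)
  then have "summable (\<lambda>m. real (Suc (m + 2)) * q ^ (m + 2 - 2))"
    by (simp add: algebra_simps)
  then show ?thesis
    by (rule summable_iff_shift[THEN iffD1])
qed

lemma exists_exit_step:
  fixes l :: "nat \<Rightarrow> 'a"
  assumes "l 0 = r" and "l n \<noteq> r"
  shows "\<exists>k<n. l k = r \<and> l (Suc k) \<noteq> r"
proof (rule ccontr)
  assume "\<not> ?thesis"
  then have "k \<le> n \<Longrightarrow> l k = r" for k
    using assms(1) by (induction k) auto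
  with assms(2) show False by auto
qed

lemma taboo_path_in_states:
  "i \<in> {1..N} \<Longrightarrow> r \<in> {1..N} \<Longrightarrow> j \<in> {1..N} \<Longrightarrow> taboo_path i r j n k \<in> {1..N}"
  by (simp add: taboo_path_def)

context
  fixes N :: nat and K :: "real \<Rightarrow> nat \<Rightarrow> nat \<Rightarrow> real measure" and \<epsilon> :: real
  assumes kernel: "semi_markov_kernel N K" and eps: "\<epsilon> \<in> {0<..1}"
begin

lemma semi_markov_kernel_sets:
  "a \<in> {1..N} \<Longrightarrow> b \<in> {1..N} \<Longrightarrow> sets (K \<epsilon> a b) = sets borel"
  using kernel eps by (simp add: semi_markov_kernel_def)

lemma semi_markov_kernel_finite:
  "a \<in> {1..N} \<Longrightarrow> b \<in> {1..N} \<Longrightarrow> finite_measure (K \<epsilon> a b)"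
  using kernel eps by (simp add: semi_markov_kernel_def)

lemma semi_markov_kernel_row_sum:
  "a \<in> {1..N} \<Longrightarrow> (\<Sum>b\<in>{1..N}. trans_prob K \<epsilon> a b) = 1"
  using kernel eps by (simp add: semi_markov_kernel_def trans_prob_def)

lemma semi_markov_kernel_trans_prob_le_1:
  assumes "a \<in> {1..N}" and "b \<in> {1..N}"
  shows "trans_prob K \<epsilon> a b \<le> 1"
proof -
  have "trans_prob K \<epsilon> a b \<le> (\<Sum>c\<in>{1..N}. trans_prob K \<epsilon> a c)"
    using assms(2) by (intro member_le_sum) (auto simp: trans_prob_def)
  also have "\<dots> = 1"
    using assms(1) by (rule semi_markov_kernel_row_sum)
  finally show ?thesis .
qed

lemma semi_markov_kernel_emeasure:
  "a \<in> {1..N} \<Longrightarrow> b \<in> {1..N} \<Longrightarrow> emeasure (K \<epsilon> a b) A = ennreal (measure (K \<epsilon> a b) A)"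
  using semi_markov_kernel_finite finite_measure.emeasure_eq_measure by blast

lemma self_loop_trans_prob_less_1:
  assumes "condA N K \<epsilon>0" and "\<epsilon> \<le> \<epsilon>0" and r: "r \<in> {1..N}" and j: "j \<in> {1..N}" "j \<noteq> r"
  shows "trans_prob K \<epsilon> r r < 1"
proof -
  obtain Y where Y_states: "\<forall>i\<in>{1..N}. Y i \<subseteq> {1..N}"
    and Y_pos: "\<forall>\<epsilon>\<in>{0<..\<epsilon>0}. \<forall>i\<in>{1..N}. \<forall>j\<in>{1..N}. j \<in> Y i \<longrightarrow> trans_prob K \<epsilon> i j > 0"
    and Y_paths: "\<forall>i\<in>{1..N}. \<forall>j\<in>{1..N}. \<exists>n\<ge>1. \<exists>l :: nat \<Rightarrow> nat.
        l 0 = i \<and> l n = j \<and> (\<forall>k<n. l (Suc k) \<in> Y (l k))"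
    using assms(1) unfolding condA_def by blast
  obtain n l where "l 0 = r" "l n = j" and l_steps: "\<forall>k<n. l (Suc k) \<in> Y (l k)"
    using Y_paths r j by blast
  then obtain k where "k < n" "l k = r" "l (Suc k) \<noteq> r"
    using exists_exit_step[of l r n] j by auto
  define b where "b = l (Suc k)"
  have "b \<in> Y r" "b \<noteq> r"
    using l_steps \<open>k < n\<close> \<open>l k = r\<close> \<open>l (Suc k) \<noteq> r\<close> by (auto simp: b_def)
  then have b: "b \<in> {1..N}" "b \<noteq> r"
    using Y_states r by blast+
  have "trans_prob K \<epsilon> r b > 0"
    using Y_pos eps assms(2) r b \<open>b \<in> Y r\<close> by auto
  have "trans_prob K \<epsilon> r r + trans_prob K \<epsilon> r b = (\<Sum>c\<in>{r, b}. trans_prob K \<epsilon> r c)"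
    using b by simp
  also have "\<dots> \<le> (\<Sum>c\<in>{1..N}. trans_prob K \<epsilon> r c)"
    using r b by (intro sum_mono2) (auto simp: trans_prob_def)
  also have "\<dots> = 1"
    using r by (rule semi_markov_kernel_row_sum)
  finally show ?thesis
    using \<open>trans_prob K \<epsilon> r b > 0\<close> by linarith
qed

lemma taboo_factor:
  fixes n k :: nat
  assumes "i \<in> {1..N}" and "r \<in> {1..N}" and "j \<in> {1..N}"
  defines "M \<equiv> K \<epsilon> (taboo_path i r j n (k - 1)) (taboo_path i r j n k)"
  shows "sets M = sets borel" and "finite_measure M" and "emeasure M UNIV \<le> 1"
proof -
  have states: "taboo_path i r j n (k - 1) \<in> {1..N}" "taboo_path i r j n k \<in> {1..N}"
    using taboo_path_in_states[OF assms(1-3)] by blast+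
  show "sets M = sets borel" "finite_measure M"
    unfolding M_def using states by (rule semi_markov_kernel_sets semi_markov_kernel_finite)+
  show "emeasure M UNIV \<le> 1"
    unfolding M_def using states semi_markov_kernel_trans_prob_le_1[OF states]
    by (simp add: semi_markov_kernel_emeasure trans_prob_def)
qed

lemma product_sigma_finite_taboo:
  assumes "i \<in> {1..N}" and "r \<in> {1..N}" and "j \<in> {1..N}"
  shows "product_sigma_finite (\<lambda>k. K \<epsilon> (taboo_path i r j n (k - 1)) (taboo_path i r j n k))"
  using taboo_factor(2)[OF assms] by (simp add: product_sigma_finite_def finite_measure_def)

lemma red_Q_at_0_eq_0:
  assumes "condB N K \<epsilon>0" and "\<epsilon> \<le> \<epsilon>0" and "i \<in> {1..N}" and "r \<in> {1..N}" and "j \<in> {1..N}"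
  shows "red_Q K r \<epsilon> i j 0 = 0"
proof -
  have "Qdf K \<epsilon> a b 0 = 0" if "a \<in> {1..N}" "b \<in> {1..N}" for a b
    using assms(1,2) eps that unfolding condB_def by auto
  then have null: "emeasure (K \<epsilon> a b) {..0} = 0" if "a \<in> {1..N}" "b \<in> {1..N}" for a b
    using that by (simp add: Qdf_def semi_markov_kernel_emeasure)
  have "emeasure (taboo_law K \<epsilon> r i j (Suc m))
      {x \<in> space (taboo_law K \<epsilon> r i j (Suc m)). (\<Sum>k\<in>{1..Suc m}. x k) \<le> 0} = 0" for m
    unfolding taboo_law_def using assms(3-5)
    by (intro emeasure_PiM_sum_nonpos_eq_0 product_sigma_finite_taboo taboo_factor null
        taboo_path_in_states) auto
  then show ?thesis
    by (simp add: red_Q_def)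
qed

text \<open>Only the first and the last step of a taboo path can leave r, so at least n - 3 of
  the n - 1 factors other than the k-th are the self-loop kernel at r.\<close>
lemma nn_integral_taboo_law_le:
  assumes states: "i \<in> {1..N}" "r \<in> {1..N}" "j \<in> {1..N}"
    and expect_le: "\<And>a b. a \<in> {1..N} \<Longrightarrow> b \<in> {1..N} \<Longrightarrow> expect K \<epsilon> a b \<le> E"
  shows "(\<integral>\<^sup>+ x. ennreal (\<Sum>k\<in>{1..n}. x k) \<partial>taboo_law K \<epsilon> r i j n)
    \<le> of_nat n * (E * ennreal (trans_prob K \<epsilon> r r ^ (n - 3)))"
proof -
  define q where "q = trans_prob K \<epsilon> r r"
  define M where "M k = K \<epsilon> (taboo_path i r j n (k - 1)) (taboo_path i r j n k)" for k
  have law: "taboo_law K \<epsilon> r i j n = PiM {1..n} M"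
    by (simp add: taboo_law_def M_def[abs_def])
  have "product_sigma_finite M"
    unfolding M_def using states by (rule product_sigma_finite_taboo)
  have M_sets: "sets (M k) = sets borel" and M_mass: "emeasure (M k) UNIV \<le> 1" for k
    unfolding M_def using states by (rule taboo_factor)+
  have M_expect: "(\<integral>\<^sup>+ t. ennreal t \<partial>M k) \<le> E" for k
    unfolding M_def by (intro expect_le[unfolded expect_def] taboo_path_in_states[OF states])
  have M_loop: "emeasure (M k) UNIV = ennreal q" if "k \<in> {2..<n}" for k
  proof -
    have "M k = K \<epsilon> r r"
      using that by (auto simp: M_def taboo_path_def)
    then show ?thesis
      using states by (simp add: q_def trans_prob_def semi_markov_kernel_emeasure)
  qed
  have others_le: "(\<Prod>l\<in>{1..n} - {k}. emeasure (M l) UNIV) \<le> ennreal (q ^ (n - 3))" for k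
  proof -
    have "(\<Prod>l\<in>{1..n} - {k}. emeasure (M l) UNIV) \<le> ennreal q ^ card ({2..<n} - {k})"
      using M_mass M_loop by (intro prod_le_power_card) auto
    also have "\<dots> \<le> ennreal (q ^ (n - 3))"
    proof -
      have "n - 3 \<le> card ({2..<n} - {k})"
        by (auto simp: card_Diff_singleton_if)
      moreover have "0 \<le> q" "q \<le> 1"
        using semi_markov_kernel_trans_prob_le_1[OF states(2,2)] by (simp_all add: q_def trans_prob_def)
      ultimately show ?thesis
        by (simp add: ennreal_power power_decreasing)
    qed
    finally show ?thesis .
  qed
  have "(\<integral>\<^sup>+ x. ennreal (\<Sum>k\<in>{1..n}. x k) \<partial>taboo_law K \<epsilon> r i j n)
      \<le> (\<Sum>k\<in>{1..n}. (\<integral>\<^sup>+ t. ennreal t \<partial>M k) * (\<Prod>l\<in>{1..n} - {k}. emeasure (M l) UNIV))"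
    unfolding law by (intro nn_integral_PiM_sum_le \<open>product_sigma_finite M\<close> M_sets) simp
  also have "\<dots> \<le> (\<Sum>k\<in>{1..n}. E * ennreal (q ^ (n - 3)))"
    by (intro sum_mono mult_mono M_expect others_le) auto
  finally show ?thesis
    by (simp add: q_def)
qed

lemma red_e_less_top:
  assumes "condA N K \<epsilon>0" and "condC N K \<epsilon>0" and "\<epsilon> \<le> \<epsilon>0"
    and i: "i \<in> {1..N}" and r: "r \<in> {1..N}" and j: "j \<in> {1..N}" "j \<noteq> r"
  shows "red_e K r \<epsilon> i j < \<infinity>"
proof -
  define q where "q = trans_prob K \<epsilon> r r"
  define E where "E = (\<Sum>a\<in>{1..N}. \<Sum>b\<in>{1..N}. expect K \<epsilon> a b)"
  have "E < \<infinity>"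
    using assms(2,3) eps unfolding E_def condC_def by simp
  have expect_le: "expect K \<epsilon> a b \<le> E" if "a \<in> {1..N}" "b \<in> {1..N}" for a b
  proof -
    have "expect K \<epsilon> a b \<le> (\<Sum>b\<in>{1..N}. expect K \<epsilon> a b)"
      using that by (intro member_le_sum) auto
    also have "\<dots> \<le> E"
      unfolding E_def using that by (intro member_le_sum) auto
    finally show ?thesis .
  qed
  have q: "0 \<le> q" "q < 1"
    using self_loop_trans_prob_less_1[OF assms(1,3) r j] by (simp_all add: q_def trans_prob_def)
  have "red_e K r \<epsilon> i j \<le> (\<Sum>m. E * ennreal (real (Suc m) * q ^ (m - 2)))"
    unfolding red_e_def
  proof (intro suminf_le summableI)
    fix m
    have "of_nat (Suc m) * (E * ennreal (q ^ (Suc m - 3))) = E * ennreal (real (Suc m) * q ^ (m - 2))"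
      using q by (simp add: ennreal_mult ennreal_of_nat_eq_real_of_nat mult.left_commute)
    then show "(\<integral>\<^sup>+ x. ennreal (\<Sum>k\<in>{1..Suc m}. x k) \<partial>taboo_law K \<epsilon> r i j (Suc m))
        \<le> E * ennreal (real (Suc m) * q ^ (m - 2))"
      using nn_integral_taboo_law_le[OF i r j(1) expect_le, of "Suc m"] by (simp add: q_def)
  qed
  also have "\<dots> = E * ennreal (\<Sum>m. real (Suc m) * q ^ (m - 2))"
  proof -
    have "summable (\<lambda>m. real (Suc m) * q ^ (m - 2))"
      using q by (intro summable_Suc_mult_power_minus_2) simp
    then have "(\<Sum>m. ennreal (real (Suc m) * q ^ (m - 2))) = ennreal (\<Sum>m. real (Suc m) * q ^ (m - 2))"
      using q by (intro suminf_ennreal2) auto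
    then show ?thesis
      by simp
  qed
  also have "\<dots> < \<infinity>"
    using \<open>E < \<infinity>\<close> by (simp add: ennreal_mult_less_top)
  finally show ?thesis .
qed

end

theorem lemma7:
  fixes N :: nat and K :: "real \<Rightarrow> nat \<Rightarrow> nat \<Rightarrow> real measure"
    and init :: "real \<Rightarrow> nat \<Rightarrow> real" and \<epsilon>0 :: real and r :: nat
  assumes "N \<ge> 1"
    and "semi_markov_kernel N K"
    and "\<forall>\<epsilon>\<in>{0<..1}. (\<forall>i\<in>{1..N}. init \<epsilon> i \<ge> 0) \<and> (\<Sum>i\<in>{1..N}. init \<epsilon> i) = 1"
    and "0 < \<epsilon>0" and "\<epsilon>0 \<le> 1"
    and "condA N K \<epsilon>0" and "condB N K \<epsilon>0" and "condC N K \<epsilon>0"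
    and "r \<in> {1..N}"
    and "\<forall>\<epsilon>\<in>{0<..1}. init \<epsilon> r = 0"
  shows "\<forall>\<epsilon>\<in>{0<..\<epsilon>0}. \<forall>i\<in>{1..N} - {r}. \<forall>j\<in>{1..N} - {r}.
           red_Q K r \<epsilon> i j 0 = 0 \<and> red_e K r \<epsilon> i j < \<infinity>"
proof (intro ballI conjI)
  fix \<epsilon> i j
  assume \<epsilon>: "\<epsilon> \<in> {0<..\<epsilon>0}" and i: "i \<in> {1..N} - {r}" and j: "j \<in> {1..N} - {r}"
  then have "\<epsilon> \<in> {0<..1}" and "\<epsilon> \<le> \<epsilon>0"
    using \<open>\<epsilon>0 \<le> 1\<close> by auto
  show "red_Q K r \<epsilon> i j 0 = 0"
    using red_Q_at_0_eq_0[OF assms(2) \<open>\<epsilon> \<in> {0<..1}\<close> assms(7) \<open>\<epsilon> \<le> \<epsilon>0\<close>] i j assms(9)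
    by blast
  show "red_e K r \<epsilon> i j < \<infinity>"
    using red_e_less_top[OF assms(2) \<open>\<epsilon> \<in> {0<..1}\<close> assms(6,8) \<open>\<epsilon> \<le> \<epsilon>0\<close>] i j assms(9)
    by blast
qed

end
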